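(* Let $R$ be an integral domain and $M=\begin{pmatrix}a&b\\c&d\end{pmatrix}$ a $2\times2$ matrix over $R$. The map $S\colon R^2\to R^2$ given by left multiplication by $M$ on column vectors is a solution of the Yang--Baxter equation on $R$ if and only if $M$ has at least one of the following forms (for some $b,c\in R$): $$\begin{pmatrix}1-bc&b\\c&0\end{pmatrix},\quad \begin{pmatrix}0&b\\c&1-bc\end{pmatrix},\quad \begin{pmatrix}0&b\\c&0\end{pmatrix},\quad \begin{pmatrix}1&0\\0&1\end{pmatrix}.$$
   Context: For a nonempty set $X$, a map $S\colon X^2\to X^2$ is a solution of the Yang--Baxter equation on $X$ if $S_1S_2S_1=S_2S_1S_2$ as maps $X^3\to X^3$, where $S_1=S\times\mathrm{Id}$ and $S_2=\mathrm{Id}\times S$. *)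

theory Defs
  imports Main
begin

text \<open>Yang-Baxter equation on the set X = UNIV of a type: S1 S2 S1 = S2 S1 S2 on X^3,
  where S1 = S x Id and S2 = Id x S. Triples are represented as 'a \<times> 'a \<times> 'a.\<close>

definition S1 :: "('a \<times> 'a \<Rightarrow> 'a \<times> 'a) \<Rightarrow> 'a \<times> 'a \<times> 'a \<Rightarrow> 'a \<times> 'a \<times> 'a" where
  "S1 S = (\<lambda>(x, y, z). let (u, v) = S (x, y) in (u, v, z))"

definition S2 :: "('a \<times> 'a \<Rightarrow> 'a \<times> 'a) \<Rightarrow> 'a \<times> 'a \<times> 'a \<Rightarrow> 'a \<times> 'a \<times> 'a" where
  "S2 S = (\<lambda>(x, y, z). let (v, w) = S (y, z) in (x, v, w))"

definition is_YBE_solution :: "('a \<times> 'a \<Rightarrow> 'a \<times> 'a) \<Rightarrow> bool" where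
  "is_YBE_solution S \<longleftrightarrow> S1 S \<circ> S2 S \<circ> S1 S = S2 S \<circ> S1 S \<circ> S2 S"

definition mat2_map :: "'a::comm_ring_1 \<Rightarrow> 'a \<Rightarrow> 'a \<Rightarrow> 'a \<Rightarrow> 'a \<times> 'a \<Rightarrow> 'a \<times> 'a" where
  "mat2_map a b c d = (\<lambda>(x, y). (a * x + b * y, c * x + d * y))"

end

theory Submission
  imports Defs
begin

text \<open>Both sides of the Yang-Baxter equation for a linear map are linear maps of \<open>R\<^sup>3\<close>, so
  the equation amounts to the equality of two \<open>3 \<times> 3\<close> matrices. Comparing entries gives five
  polynomial conditions on \<open>a, b, c, d\<close>; over an integral domain they factor, and a case
  distinction on \<open>a = 0\<close> and \<open>d = 0\<close> leaves exactly the four listed families.\<close>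

lemma linear_form3_eq_iff:
  fixes p q r p' q' r' :: "'a::comm_ring_1"
  shows "(\<forall>x y z. p * x + q * y + r * z = p' * x + q' * y + r' * z) \<longleftrightarrow>
    p = p' \<and> q = q' \<and> r = r'"
proof
  assume "\<forall>x y z. p * x + q * y + r * z = p' * x + q' * y + r' * z"
  from this[rule_format, of 1 0 0] this[rule_format, of 0 1 0] this[rule_format, of 0 0 1]
  show "p = p' \<and> q = q' \<and> r = r'" by simp
qed simp

lemma S1_S2_S1_mat2_map:
  "(S1 (mat2_map a b c d) \<circ> S2 (mat2_map a b c d) \<circ> S1 (mat2_map a b c d)) (x, y, z) =
    ((a*a + a*b*c) * x + (a*b + a*b*d) * y + b*b * z,
     (a*c + a*c*d) * x + (b*c + a*d*d) * y + b*d * z,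
     c*c * x + c*d * y + d * z)"
  by (simp add: S1_def S2_def mat2_map_def algebra_simps)

lemma S2_S1_S2_mat2_map:
  "(S2 (mat2_map a b c d) \<circ> S1 (mat2_map a b c d) \<circ> S2 (mat2_map a b c d)) (x, y, z) =
    (a * x + a*b * y + b*b * z,
     a*c * x + (a*a*d + b*c) * y + (a*b*d + b*d) * z,
     c*c * x + (a*c*d + c*d) * y + (b*c*d + d*d) * z)"
  by (simp add: S1_def S2_def mat2_map_def algebra_simps)

lemma is_YBE_solution_mat2_map_iff:
  fixes a b c d :: "'a::comm_ring_1"
  shows "is_YBE_solution (mat2_map a b c d) \<longleftrightarrow>
    a * (a + b * c - 1) = 0 \<and> a * b * d = 0 \<and> a * c * d = 0 \<and>
    a * d * (d - a) = 0 \<and> d * (d + b * c - 1) = 0"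
proof -
  have "is_YBE_solution (mat2_map a b c d) \<longleftrightarrow>
    (\<forall>x y z. (S1 (mat2_map a b c d) \<circ> S2 (mat2_map a b c d) \<circ> S1 (mat2_map a b c d)) (x, y, z) =
             (S2 (mat2_map a b c d) \<circ> S1 (mat2_map a b c d) \<circ> S2 (mat2_map a b c d)) (x, y, z))"
    unfolding is_YBE_solution_def fun_eq_iff by auto
  also have "\<dots> \<longleftrightarrow>
      a*a + a*b*c = a \<and> a*b + a*b*d = a*b \<and>
      a*c + a*c*d = a*c \<and> b*c + a*d*d = a*a*d + b*c \<and> b*d = a*b*d + b*d \<and>
      c*d = a*c*d + c*d \<and> d = b*c*d + d*d"
    unfolding S1_S2_S1_mat2_map S2_S1_S2_mat2_map prod.inject all_conj_distrib
      linear_form3_eq_iff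
    by auto
  also have "\<dots> \<longleftrightarrow>
    a * (a + b * c - 1) = 0 \<and> a * b * d = 0 \<and> a * c * d = 0 \<and>
    a * d * (d - a) = 0 \<and> d * (d + b * c - 1) = 0"
    by (auto simp: algebra_simps eq_iff_diff_eq_0[of "a*a + a*b*c"])
  finally show ?thesis .
qed

lemma mat2_YBE_conditions_iff:
  fixes a b c d :: "'a::idom"
  shows "a * (a + b * c - 1) = 0 \<and> a * b * d = 0 \<and> a * c * d = 0 \<and>
      a * d * (d - a) = 0 \<and> d * (d + b * c - 1) = 0 \<longleftrightarrow>
    (a = 1 - b * c \<and> d = 0) \<or> (a = 0 \<and> d = 1 - b * c) \<or>
    (a = 0 \<and> d = 0) \<or> (a = 1 \<and> b = 0 \<and> c = 0 \<and> d = 1)"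
    (is "?conditions \<longleftrightarrow> ?forms")
proof
  assume conds: ?conditions
  show ?forms
  proof (cases "a = 0")
    case True
    from conds have "d = 0 \<or> d + b * c - 1 = 0" by simp
    with True show ?thesis by (auto simp: algebra_simps)
  next
    case a_nonzero: False
    with conds have "a + b * c - 1 = 0" by simp
    then have a: "a = 1 - b * c" by (simp add: algebra_simps)
    show ?thesis
    proof (cases "d = 0")
      case True
      with a show ?thesis by simp
    next
      case False
      with a_nonzero conds have "d = a" "b = 0" "c = 0" by auto
      with a show ?thesis by simp
    qed
  qed
qed auto

theorem theorem5p10:
  fixes a b c d :: "'a::idom"
  shows "is_YBE_solution (mat2_map a b c d) \<longleftrightarrow>
     ((a = 1 - b * c \<and> d = 0) \<or>
      (a = 0 \<and> d = 1 - b * c) \<or>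
      (a = 0 \<and> d = 0) \<or>
      (a = 1 \<and> b = 0 \<and> c = 0 \<and> d = 1))"
  unfolding is_YBE_solution_mat2_map_iff by (rule mat2_YBE_conditions_iff)

end
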